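(* Let $a,b$ be integers with $0<b<a$, let $S=\langle a,a+1,\ldots,a+b\rangle$ with conductor $c$, and let $m\ge 2c-1$. Let $q$ be a nonnegative integer and $j\in\{0,\ldots,a-1\}$. Then $$\mathrm D(m,m+qa+j)=\mathrm D(m)\cup\Big\{m-(ka+r)\ \Big|\ 0\le r\le a-j-1,\ \tfrac{r+j}{b}-q\le k<\tfrac{r}{b}\Big\}\cup\Big\{m-(ka+r)\ \Big|\ a-j\le r\le a-1,\ \tfrac{r+j-(a+b)}{b}-q\le k<\tfrac{r}{b}\Big\},$$ where $k,r$ range over integers, and this union is disjoint.
   Context: The conductor $c$ of a numerical semigroup $S$ is the least element of $S$ with $c+n\in S$ for all $n\in\mathbb N$. For $x\in S$, $\mathrm D(x)=\{\alpha\in S\mid x-\alpha\in S\}$, and $\mathrm D(x_1,\ldots,x_t)=\mathrm D(x_1)\cup\cdots\cup\mathrm D(x_t)$. *)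

theory Defs
  imports Complex_Main
begin

inductive_set gen_semigroup :: "int set \<Rightarrow> int set" for G :: "int set" where
  zero: "0 \<in> gen_semigroup G"
| add: "x \<in> gen_semigroup G \<Longrightarrow> g \<in> G \<Longrightarrow> x + g \<in> gen_semigroup G"

definition conductor :: "int set \<Rightarrow> int" where
  "conductor S = (LEAST c. c \<in> S \<and> (\<forall>n::nat. c + int n \<in> S))"

definition Dset :: "int set \<Rightarrow> int \<Rightarrow> int set" where
  "Dset S x = {\<alpha> \<in> S. x - \<alpha> \<in> S}"

end

theory Submission
  imports Defs
begin

text \<open>Writing \<open>x = k a + r\<close> with \<open>0 \<le> r < a\<close>, the semigroup \<open>\<langle>a, \<dots>, a + b\<rangle>\<close> consists of
  the \<open>x\<close> with \<open>r \<le> k b\<close>, since its elements with \<open>n\<close> summands fill the interval \<open>[n a, n (a + b)]\<close>.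
  Beyond \<open>m \<ge> 2c - 1\<close> every \<open>\<alpha>\<close> with \<open>m - \<alpha> \<notin> S\<close> exceeds the conductor, so \<open>D(m') - D(m)\<close>
  consists of the \<open>\<alpha>\<close> with \<open>m - \<alpha> \<notin> S\<close> and \<open>m' - \<alpha> \<in> S\<close>; for \<open>m' = m + q a + j\<close> both
  conditions are read off the division of \<open>m - \<alpha>\<close> by \<open>a\<close>, the carry \<open>r + j \<ge> a\<close> separating
  the two families.\<close>

lemma of_int_divide_diff_le_iff:
  assumes "0 < b"
  shows "real_of_int u / real_of_int b - real_of_int q \<le> real_of_int k \<longleftrightarrow> u \<le> (k + q) * b"
proof -
  have "real_of_int u / real_of_int b - real_of_int q \<le> real_of_int k \<longleftrightarrow>
      real_of_int u / real_of_int b \<le> real_of_int (k + q)"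
    by auto
  also have "\<dots> \<longleftrightarrow> real_of_int u \<le> real_of_int (k + q) * real_of_int b"
    using assms by (simp add: pos_divide_le_eq)
  also have "\<dots> \<longleftrightarrow> u \<le> (k + q) * b"
    by (metis of_int_le_iff of_int_mult)
  finally show ?thesis .
qed

lemma of_int_less_divide_iff:
  "0 < b \<Longrightarrow> real_of_int k < real_of_int r / real_of_int b \<longleftrightarrow> k * b < r"
  by (simp add: pos_less_divide_eq flip: of_int_mult)

lemma mem_divmod_param_iff:
  fixes a m \<alpha> :: int
  assumes "0 < a" and "\<And>k r. P k r \<Longrightarrow> 0 \<le> r \<and> r < a"
  shows "\<alpha> \<in> {m - (k * a + r) | k r. P k r} \<longleftrightarrow> P ((m - \<alpha>) div a) ((m - \<alpha>) mod a)"
proof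
  assume "\<alpha> \<in> {m - (k * a + r) | k r. P k r}"
  then obtain k r where "m - \<alpha> = k * a + r" "P k r" by auto
  with assms show "P ((m - \<alpha>) div a) ((m - \<alpha>) mod a)"
    by (simp add: div_pos_pos_trivial mod_pos_pos_trivial)
next
  assume "P ((m - \<alpha>) div a) ((m - \<alpha>) mod a)"
  moreover have "\<alpha> = m - ((m - \<alpha>) div a * a + (m - \<alpha>) mod a)" by simp
  ultimately show "\<alpha> \<in> {m - (k * a + r) | k r. P k r}" by blast
qed

lemma gen_semigroup_nonneg:
  assumes "G \<subseteq> {0..}" and "x \<in> gen_semigroup G"
  shows "0 \<le> x"
  using assms(2) by induction (use assms(1) in auto)

lemma mem_if_conductor_le:
  fixes S :: "int set"
  assumes nonneg: "S \<subseteq> {0..}" and cofinite: "\<And>y. N \<le> y \<Longrightarrow> y \<in> S"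
    and "conductor S \<le> x"
  shows "x \<in> S"
proof -
  \<comment> \<open>\<open>int\<close> is not well-ordered, so the \<open>LEAST\<close> in \<open>conductor\<close> is computed over \<open>nat\<close>\<close>
  let ?P = "\<lambda>c. c \<in> S \<and> (\<forall>n::nat. c + int n \<in> S)"
  define n0 where "n0 = (LEAST n::nat. ?P (int n))"
  have "?P (int (nat (max N 0)))"
    using cofinite by simp
  then have P_n0: "?P (int n0)"
    unfolding n0_def by (rule LeastI)
  have "int n0 \<le> y" if "?P y" for y
  proof -
    have "0 \<le> y" using that nonneg by auto
    with that have "n0 \<le> nat y"
      unfolding n0_def by (intro Least_le) simp
    with \<open>0 \<le> y\<close> show ?thesis by simp
  qed
  with P_n0 have "conductor S = int n0"
    unfolding conductor_def by (intro Least_equality) auto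
  with assms(3) have "x = int n0 + int (nat (x - int n0))" by simp
  with P_n0 show ?thesis by metis
qed

lemma Dset_diff_iff_beyond_conductor:
  assumes conductor: "\<And>x. conductor S \<le> x \<Longrightarrow> x \<in> S"
    and "2 * conductor S - 1 \<le> m"
  shows "\<alpha> \<in> Dset S m' \<and> \<alpha> \<notin> Dset S m \<longleftrightarrow> m' - \<alpha> \<in> S \<and> m - \<alpha> \<notin> S"
proof -
  have "\<alpha> \<in> S" if "m - \<alpha> \<notin> S"
  proof -
    from that conductor have "m - \<alpha> < conductor S" by (meson not_le)
    with assms(2) show ?thesis using conductor by simp
  qed
  then show ?thesis unfolding Dset_def by auto
qed

lemma interval_semigroup_bounds:
  assumes "y \<in> gen_semigroup {a..a+b}"
  shows "\<exists>n::int. 0 \<le> n \<and> n * a \<le> y \<and> y \<le> n * (a + b)"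
  using assms
proof induction
  case zero
  show ?case by (intro exI[of _ 0]) simp
next
  case (add x g)
  then obtain n where "0 \<le> n" "n * a \<le> x" "x \<le> n * (a + b)" by blast
  with add.hyps(2) show ?case
    by (intro exI[of _ "n + 1"]) (auto simp: algebra_simps)
qed

lemma interval_semigroup_memI:
  assumes "0 < a" "0 \<le> b" "int n * a \<le> y" "y \<le> int n * (a + b)"
  shows "y \<in> gen_semigroup {a..a+b}"
  using assms(3,4)
proof (induction n arbitrary: y)
  case 0
  then show ?case by (simp add: gen_semigroup.zero)
next
  case (Suc n)
  \<comment> \<open>peel off the largest admissible generator\<close>
  define g where "g = min (a + b) (y - int n * a)"
  have "g \<in> {a..a+b}" "int n * a \<le> y - g" "y - g \<le> int n * (a + b)"
    using Suc.prems assms(1,2) unfolding g_def by (auto simp: algebra_simps min_def)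
  with Suc.IH have "(y - g) + g \<in> gen_semigroup {a..a+b}"
    by (blast intro: gen_semigroup.add)
  then show ?case by simp
qed

lemma interval_semigroup_mem_iff:
  fixes a b k r :: int
  assumes "0 < a" "0 < b" "0 \<le> r" "r < a"
  shows "k * a + r \<in> gen_semigroup {a..a+b} \<longleftrightarrow> r \<le> k * b"
proof
  assume "k * a + r \<in> gen_semigroup {a..a+b}"
  then obtain n where n: "n * a \<le> k * a + r" "k * a + r \<le> n * (a + b)"
    using interval_semigroup_bounds by blast
  with assms have "n * a < (k + 1) * a" by (simp add: algebra_simps)
  with assms(1) have "n \<le> k" by simp
  with assms(1,2) have "n * (a + b) \<le> k * (a + b)" by (simp add: mult_right_mono)
  with n show "r \<le> k * b" by (simp add: algebra_simps)
next
  assume "r \<le> k * b"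
  with assms have "0 \<le> k * b" by simp
  with assms(2) have "0 \<le> k" by (simp add: zero_le_mult_iff)
  with \<open>r \<le> k * b\<close> assms show "k * a + r \<in> gen_semigroup {a..a+b}"
    using interval_semigroup_memI[of a b "nat k" "k * a + r"] by (simp add: algebra_simps)
qed

lemma interval_semigroup_mem_if_ge_square:
  fixes a b y :: int
  assumes "0 < a" "0 < b" "a * a \<le> y"
  shows "y \<in> gen_semigroup {a..a+b}"
proof -
  have "a \<le> y div a"
    using zdiv_mono1[OF assms(3) assms(1)] assms(1) by simp
  moreover have "y div a * 1 \<le> y div a * b"
    using \<open>a \<le> y div a\<close> assms(1,2) by (intro mult_left_mono) auto
  ultimately have "a \<le> y div a * b" by simp
  moreover have "0 \<le> y mod a" "y mod a < a" using assms(1) by simp_all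
  ultimately show ?thesis
    using interval_semigroup_mem_iff[OF assms(1,2), of "y mod a" "y div a"] by simp
qed

lemma interval_semigroup_mem_if_conductor_le:
  fixes a b x :: int
  assumes "0 < a" "0 < b" "conductor (gen_semigroup {a..a+b}) \<le> x"
  shows "x \<in> gen_semigroup {a..a+b}"
proof (rule mem_if_conductor_le[OF _ _ assms(3)])
  show "gen_semigroup {a..a+b} \<subseteq> {0..}"
    using assms(1,2) gen_semigroup_nonneg[of "{a..a+b}"] by auto
  show "y \<in> gen_semigroup {a..a+b}" if "a * a \<le> y" for y
    using interval_semigroup_mem_if_ge_square[OF assms(1,2) that] .
qed

lemma interval_semigroup_shift_mem_iff:
  fixes a b k r q j :: int
  assumes "0 < a" "0 < b" "0 \<le> r" "r < a" "0 \<le> j" "j < a"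
  shows "k * a + r + (q * a + j) \<in> gen_semigroup {a..a+b} \<longleftrightarrow>
    r \<le> a - j - 1 \<and> r + j \<le> (k + q) * b \<or> a - j \<le> r \<and> r + j - (a + b) \<le> (k + q) * b"
proof (cases "r + j < a")
  case True
  have carry_free: "k * a + r + (q * a + j) = (k + q) * a + (r + j)"
    by (simp add: algebra_simps)
  show ?thesis
    unfolding carry_free
    using True assms interval_semigroup_mem_iff[OF assms(1,2), of "r + j" "k + q"] by auto
next
  case False
  have carry: "k * a + r + (q * a + j) = (k + q + 1) * a + (r + j - a)"
    by (simp add: algebra_simps)
  have "r + j - a \<le> (k + q + 1) * b \<longleftrightarrow> r + j - (a + b) \<le> (k + q) * b"
    by (simp add: algebra_simps)
  then show ?thesis
    unfolding carry
    using False assms interval_semigroup_mem_iff[OF assms(1,2), of "r + j - a" "k + q + 1"] by auto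
qed

lemma interval_semigroup_Dset_diff_iff:
  fixes a b m q j k r \<alpha> :: int
  defines "S \<equiv> gen_semigroup {a..a+b}"
  assumes "0 < a" "0 < b" "2 * conductor S - 1 \<le> m" "0 \<le> j" "j < a"
    and "m - \<alpha> = k * a + r" "0 \<le> r" "r < a"
  shows "\<alpha> \<in> Dset S (m + q * a + j) \<and> \<alpha> \<notin> Dset S m \<longleftrightarrow> k * b < r \<and>
    (r \<le> a - j - 1 \<and> r + j \<le> (k + q) * b \<or> a - j \<le> r \<and> r + j - (a + b) \<le> (k + q) * b)"
proof -
  have conductor: "\<And>x. conductor S \<le> x \<Longrightarrow> x \<in> S"
    unfolding S_def using interval_semigroup_mem_if_conductor_le assms(2,3) by blast
  have shifted: "m + q * a + j - \<alpha> = k * a + r + (q * a + j)"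
    using assms(7) by (simp add: algebra_simps)
  have "\<alpha> \<in> Dset S (m + q * a + j) \<and> \<alpha> \<notin> Dset S m \<longleftrightarrow>
      k * a + r + (q * a + j) \<in> S \<and> k * a + r \<notin> S"
    using Dset_diff_iff_beyond_conductor[OF conductor assms(4),
        where m' = "m + q * a + j" and \<alpha> = \<alpha>]
    unfolding shifted assms(7) .
  then show ?thesis
    unfolding S_def
    using interval_semigroup_mem_iff interval_semigroup_shift_mem_iff assms by auto
qed

theorem lemma4p2:
  fixes a b m q j :: int
  defines "S \<equiv> gen_semigroup {a..a+b}"
  defines "c \<equiv> conductor S"
  defines "A \<equiv> {m - (k*a + r) | k r. 0 \<le> r \<and> r \<le> a - j - 1 \<and>
                  real_of_int (r + j) / real_of_int b - real_of_int q \<le> real_of_int k \<and>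
                  real_of_int k < real_of_int r / real_of_int b}"
  defines "B \<equiv> {m - (k*a + r) | k r. a - j \<le> r \<and> r \<le> a - 1 \<and>
                  real_of_int (r + j - (a + b)) / real_of_int b - real_of_int q \<le> real_of_int k \<and>
                  real_of_int k < real_of_int r / real_of_int b}"
  assumes "0 < b" and "b < a"
    and "m \<ge> 2 * c - 1"
    and "q \<ge> 0"
    and "0 \<le> j" and "j \<le> a - 1"
  shows "Dset S m \<union> Dset S (m + q*a + j) = Dset S m \<union> A \<union> B
         \<and> Dset S m \<inter> A = {} \<and> Dset S m \<inter> B = {} \<and> A \<inter> B = {}"
proof -
  have "0 < a" using \<open>0 < b\<close> \<open>b < a\<close> by simp
  have A_int: "A = {m - (k*a + r) | k r. 0 \<le> r \<and> r \<le> a - j - 1 \<and> r + j \<le> (k + q) * b \<and> k * b < r}"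
    unfolding A_def of_int_divide_diff_le_iff[OF \<open>0 < b\<close>] of_int_less_divide_iff[OF \<open>0 < b\<close>] ..
  have B_int: "B = {m - (k*a + r) | k r. a - j \<le> r \<and> r \<le> a - 1 \<and>
      r + j - (a + b) \<le> (k + q) * b \<and> k * b < r}"
    unfolding B_def of_int_divide_diff_le_iff[OF \<open>0 < b\<close>] of_int_less_divide_iff[OF \<open>0 < b\<close>] ..
  have "\<alpha> \<in> A \<union> B \<longleftrightarrow> \<alpha> \<in> Dset S (m + q*a + j) \<and> \<alpha> \<notin> Dset S m" "\<alpha> \<notin> A \<inter> B" for \<alpha>
  proof -
    define k r where "k = (m - \<alpha>) div a" and "r = (m - \<alpha>) mod a"
    have "m - \<alpha> = k * a + r" "0 \<le> r" "r < a"
      using \<open>0 < a\<close> unfolding k_def r_def by simp_all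
    moreover have "\<alpha> \<in> A \<longleftrightarrow> 0 \<le> r \<and> r \<le> a - j - 1 \<and> r + j \<le> (k + q) * b \<and> k * b < r"
      unfolding A_int k_def r_def using \<open>0 < a\<close> \<open>0 \<le> j\<close> by (intro mem_divmod_param_iff) auto
    moreover have "\<alpha> \<in> B \<longleftrightarrow> a - j \<le> r \<and> r \<le> a - 1 \<and> r + j - (a + b) \<le> (k + q) * b \<and> k * b < r"
      unfolding B_int k_def r_def using \<open>0 < a\<close> \<open>j \<le> a - 1\<close> by (intro mem_divmod_param_iff) auto
    ultimately show "\<alpha> \<in> A \<union> B \<longleftrightarrow> \<alpha> \<in> Dset S (m + q*a + j) \<and> \<alpha> \<notin> Dset S m" "\<alpha> \<notin> A \<inter> B"
      using interval_semigroup_Dset_diff_iff[of a b m j \<alpha> k r q] \<open>0 < a\<close> assms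
      unfolding S_def c_def by auto
  qed
  then show ?thesis by blast
qed

end
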